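(* Fix integers $\delta,r,t$ with $0\le\delta\le d$ and $0\le r,t\le d-\delta$. Let $(A;\{E_i\}_{i=0}^\delta;A^*;\{E^*_i\}_{i=0}^\delta)$ be a tridiagonal system over $\mathbb{F}$ on a vector space $V$, with eigenvalue sequence $\theta_t,\theta_{t+1},\dots,\theta_{t+\delta}$ and dual eigenvalue sequence $\theta^*_r,\theta^*_{r+1},\dots,\theta^*_{r+\delta}$. Then there exists a $T$-module structure on $V$ such that (i) $a$ acts as $A$ and $a^*$ acts as $A^*$; (ii) for $0\le i\le d$, $e_i$ acts as $E_{i-t}$ if $t\le i\le t+\delta$ and as $0$ otherwise; (iii) for $0\le i\le d$, $e^*_i$ acts as $E^*_{i-r}$ if $r\le i\le r+\delta$ and as $0$ otherwise. This $T$-module is irreducible.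
   Context: $\mathbb{F}$ is a field, $d\ge0$, and $\{\theta_i\}_{i=0}^d$, $\{\theta^*_i\}_{i=0}^d$ are scalars in $\mathbb{F}$ with $\theta_i\ne\theta_j$, $\theta^*_i\ne\theta^*_j$ for $i\ne j$, such that $\frac{\theta_{i-2}-\theta_{i+1}}{\theta_{i-1}-\theta_i}$ and $\frac{\theta^*_{i-2}-\theta^*_{i+1}}{\theta^*_{i-1}-\theta^*_i}$ are equal and independent of $i$ for $2\le i\le d-1$. $T$ is the associative $\mathbb{F}$-algebra with $1$ generated by $a,e_0,\dots,e_d,a^*,e^*_0,\dots,e^*_d$ with relations $e_ie_j=\delta_{ij}e_i$, $e^*_ie^*_j=\delta_{ij}e^*_i$, $\sum_ie_i=\sum_ie^*_i=1$, $a=\sum_i\theta_ie_i$, $a^*=\sum_i\theta^*_ie^*_i$, and $e^*_ia^ke^*_j=0$, $e_i{a^*}^ke_j=0$ whenever $0\le i,j,k\le d$ and $k<|i-j|$. Tridiagonal pair on a finite-dimensional nonzero space $V$: diagonalizable linear maps $A,A^*$ such that some ordering $V_0,\dots,V_\delta$ of the eigenspaces of $A$ satisfies $A^*V_i\subseteq V_{i-1}+V_i+V_{i+1}$, some ordering $V^*_0,\dots,V^*_\delta$ of the eigenspaces of $A^*$ satisfies $AV^*_i\subseteq V^*_{i-1}+V^*_i+V^*_{i+1}$ (out-of-range terms zero), and no subspace $W\ne0,V$ is invariant under both (such orderings are standard). A tridiagonal system $(A;\{E_i\}_{i=0}^\delta;A^*;\{E^*_i\}_{i=0}^\delta)$ is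 a tridiagonal pair with standard orderings of the primitive idempotents of $A$ and $A^*$; its eigenvalue sequence lists the eigenvalue of $A$ on $E_iV$, and its dual eigenvalue sequence the eigenvalue of $A^*$ on $E^*_iV$. *)

theory Defs
  imports Complex_Main
begin

definition fin_dim_vs :: "('f::field \<Rightarrow> 'v::ab_group_add \<Rightarrow> 'v) \<Rightarrow> bool" where
  "fin_dim_vs scale \<longleftrightarrow> vector_space scale \<and>
     (\<exists>B. finite B \<and> module.span scale B = (UNIV :: 'v set)) \<and> (\<exists>v::'v. v \<noteq> 0)"

definition param_ok :: "nat \<Rightarrow> (nat \<Rightarrow> 'f::field) \<Rightarrow> (nat \<Rightarrow> 'f) \<Rightarrow> bool" where
  "param_ok d th ths \<longleftrightarrow>
     (\<forall>i\<le>d. \<forall>j\<le>d. i \<noteq> j \<longrightarrow> th i \<noteq> th j) \<and>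
     (\<forall>i\<le>d. \<forall>j\<le>d. i \<noteq> j \<longrightarrow> ths i \<noteq> ths j) \<and>
     (\<exists>c. \<forall>i. 2 \<le> i \<and> i + 1 \<le> d \<longrightarrow>
          (th (i-2) - th (i+1)) / (th (i-1) - th i) = c \<and>
          (ths (i-2) - ths (i+1)) / (ths (i-1) - ths i) = c)"

definition prim_idems :: "('f::field \<Rightarrow> 'v::ab_group_add \<Rightarrow> 'v) \<Rightarrow> nat \<Rightarrow> ('v \<Rightarrow> 'v)
     \<Rightarrow> (nat \<Rightarrow> 'v \<Rightarrow> 'v) \<Rightarrow> (nat \<Rightarrow> 'f) \<Rightarrow> bool" where
  "prim_idems scale \<delta> A E th \<longleftrightarrow>
     Vector_Spaces.linear scale scale A \<and>
     (\<forall>i\<le>\<delta>. Vector_Spaces.linear scale scale (E i) \<and> (\<exists>v. E i v \<noteq> 0)) \<and>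
     (\<forall>i\<le>\<delta>. \<forall>j\<le>\<delta>. \<forall>v. E i (E j v) = (if i = j then E i v else 0)) \<and>
     (\<forall>v. (\<Sum>i\<le>\<delta>. E i v) = v) \<and>
     (\<forall>v. A v = (\<Sum>i\<le>\<delta>. scale (th i) (E i v))) \<and>
     (\<forall>i\<le>\<delta>. \<forall>j\<le>\<delta>. i \<noteq> j \<longrightarrow> th i \<noteq> th j)"

definition nbr :: "nat \<Rightarrow> (nat \<Rightarrow> 'v \<Rightarrow> 'v::ab_group_add) \<Rightarrow> nat \<Rightarrow> 'v set" where
  "nbr \<delta> E i = {x + y + z | x y z.
      x \<in> (if 0 < i then range (E (i - 1)) else {0}) \<and>
      y \<in> range (E i) \<and>
      z \<in> (if i + 1 \<le> \<delta> then range (E (i + 1)) else {0})}"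

definition tridiagonal_system :: "('f::field \<Rightarrow> 'v::ab_group_add \<Rightarrow> 'v) \<Rightarrow> nat
     \<Rightarrow> ('v \<Rightarrow> 'v) \<Rightarrow> (nat \<Rightarrow> 'v \<Rightarrow> 'v) \<Rightarrow> ('v \<Rightarrow> 'v) \<Rightarrow> (nat \<Rightarrow> 'v \<Rightarrow> 'v)
     \<Rightarrow> (nat \<Rightarrow> 'f) \<Rightarrow> (nat \<Rightarrow> 'f) \<Rightarrow> bool" where
  "tridiagonal_system scale \<delta> A E As Es th ths \<longleftrightarrow>
     fin_dim_vs scale \<and>
     prim_idems scale \<delta> A E th \<and> prim_idems scale \<delta> As Es ths \<and>
     (\<forall>i\<le>\<delta>. As ` range (E i) \<subseteq> nbr \<delta> E i) \<and>
     (\<forall>i\<le>\<delta>. A ` range (Es i) \<subseteq> nbr \<delta> Es i) \<and>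
     (\<forall>W. module.subspace scale W \<and> A ` W \<subseteq> W \<and> As ` W \<subseteq> W \<longrightarrow>
          W = {0} \<or> W = UNIV)"

text \<open>A T-module structure on V: images a, e_i, a*, e*_i (i \<le> d) of the generators
  of T as linear maps of V satisfying the defining relations of T (by the
  universal property of the presentation this is the same as an algebra
  homomorphism T \<rightarrow> End(V)).\<close>
definition T_module :: "('f::field \<Rightarrow> 'v::ab_group_add \<Rightarrow> 'v) \<Rightarrow> nat \<Rightarrow> (nat \<Rightarrow> 'f) \<Rightarrow> (nat \<Rightarrow> 'f)
     \<Rightarrow> ('v \<Rightarrow> 'v) \<Rightarrow> (nat \<Rightarrow> 'v \<Rightarrow> 'v) \<Rightarrow> ('v \<Rightarrow> 'v) \<Rightarrow> (nat \<Rightarrow> 'v \<Rightarrow> 'v) \<Rightarrow> bool" where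
  "T_module scale d th ths a e as es \<longleftrightarrow>
     Vector_Spaces.linear scale scale a \<and> Vector_Spaces.linear scale scale as \<and>
     (\<forall>i\<le>d. Vector_Spaces.linear scale scale (e i) \<and> Vector_Spaces.linear scale scale (es i)) \<and>
     (\<forall>i\<le>d. \<forall>j\<le>d. \<forall>v. e i (e j v) = (if i = j then e i v else 0)) \<and>
     (\<forall>i\<le>d. \<forall>j\<le>d. \<forall>v. es i (es j v) = (if i = j then es i v else 0)) \<and>
     (\<forall>v. (\<Sum>i\<le>d. e i v) = v) \<and> (\<forall>v. (\<Sum>i\<le>d. es i v) = v) \<and>
     (\<forall>v. a v = (\<Sum>i\<le>d. scale (th i) (e i v))) \<and>
     (\<forall>v. as v = (\<Sum>i\<le>d. scale (ths i) (es i v))) \<and>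
     (\<forall>i\<le>d. \<forall>j\<le>d. \<forall>k\<le>d. int k < \<bar>int i - int j\<bar> \<longrightarrow>
        (\<forall>v. es i ((a ^^ k) (es j v)) = 0) \<and> (\<forall>v. e i ((as ^^ k) (e j v)) = 0))"

definition T_irreducible :: "('f::field \<Rightarrow> 'v::ab_group_add \<Rightarrow> 'v) \<Rightarrow> nat
     \<Rightarrow> ('v \<Rightarrow> 'v) \<Rightarrow> (nat \<Rightarrow> 'v \<Rightarrow> 'v) \<Rightarrow> ('v \<Rightarrow> 'v) \<Rightarrow> (nat \<Rightarrow> 'v \<Rightarrow> 'v) \<Rightarrow> bool" where
  "T_irreducible scale d a e as es \<longleftrightarrow> (\<exists>v::'v. v \<noteq> 0) \<and>
     (\<forall>W. module.subspace scale W \<and> a ` W \<subseteq> W \<and> as ` W \<subseteq> W \<and>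
          (\<forall>i\<le>d. e i ` W \<subseteq> W \<and> es i ` W \<subseteq> W) \<longrightarrow> W = {0} \<or> W = UNIV)"

end

theory Submission
  imports Defs
begin

text \<open>For \<open>e\<^sub>i a\<^sup>*\<^sup>k e\<^sub>j = 0\<close> when \<open>k < |i - j|\<close> one
  inducts on \<open>k\<close>: by tridiagonality, \<open>A\<^sup>*\<close> maps \<open>E\<^sub>lV\<close> into \<open>E\<^sub>l\<^sub>-\<^sub>1V + E\<^sub>lV + E\<^sub>l\<^sub>+\<^sub>1V\<close>,
  so each application moves a vector by at most one step in the decomposition
  \<open>V = \<Sum>\<^sub>l E\<^sub>lV\<close>; dually for \<open>e\<^sup>*\<^sub>i a\<^sup>k e\<^sup>*\<^sub>j\<close>. A subspace invariant under all generators is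
  invariant under \<open>A\<close> and \<open>A\<^sup>*\<close>, so irreducibility is that of the tridiagonal pair.\<close>

lemma linear_map_zero: "Vector_Spaces.linear s s f \<Longrightarrow> f 0 = 0"
  by (simp add: linear_iff_module_hom module_hom.zero)

lemma linear_map_add: "Vector_Spaces.linear s s f \<Longrightarrow> f (x + y) = f x + f y"
  by (simp add: linear_iff_module_hom module_hom.add)

lemma linear_map_sum: "Vector_Spaces.linear s s f \<Longrightarrow> f (sum g S) = (\<Sum>a\<in>S. f (g a))"
  by (simp add: linear_iff_module_hom module_hom.sum)

lemma linear_map_funpow_zero: "Vector_Spaces.linear s s f \<Longrightarrow> (f ^^ k) 0 = 0"
  by (induction k) (simp_all add: linear_map_zero)

lemma linear_const_zero: "vector_space s \<Longrightarrow> Vector_Spaces.linear s s (\<lambda>v. 0)"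
  using vector_space_pair.linear_zero[of s s] by (simp add: vector_space_pair_def)

definition orthogonal_idempotents :: "nat \<Rightarrow> (nat \<Rightarrow> 'v \<Rightarrow> 'v::zero) \<Rightarrow> bool" where
  "orthogonal_idempotents \<delta> F \<longleftrightarrow>
     (\<forall>i\<le>\<delta>. \<forall>j\<le>\<delta>. \<forall>v. F i (F j v) = (if i = j then F i v else 0))"

lemma idempotent_vanishes_on_nbr:
  assumes lin: "\<forall>i\<le>\<delta>. Vector_Spaces.linear s s (F i)"
    and orth: "orthogonal_idempotents \<delta> F"
    and m: "m \<le> \<delta>" and l: "l \<le> \<delta>" and far: "1 < \<bar>int m - int l\<bar>" and w: "w \<in> nbr \<delta> F l"
  shows "F m w = 0"
proof -
  obtain x y z where w: "w = x + y + z"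
    and x: "x \<in> (if 0 < l then range (F (l - 1)) else {0})"
    and y: "y \<in> range (F l)"
    and z: "z \<in> (if l + 1 \<le> \<delta> then range (F (l + 1)) else {0})"
    using w unfolding nbr_def by blast
  have kill: "F m (F l' u) = 0" if "l' \<le> \<delta>" "l' \<noteq> m" for l' u
    using orth that m unfolding orthogonal_idempotents_def by simp
  have "F m 0 = 0"
    using lin m linear_map_zero by blast
  with x y z l far kill have "F m x = 0" "F m y = 0" "F m z = 0"
    by (auto split: if_splits)
  then show ?thesis
    using w lin m linear_map_add[of s "F m"] by simp
qed

lemma idempotent_funpow_idempotent_eq_0:
  assumes lin: "\<forall>i\<le>\<delta>. Vector_Spaces.linear s s (F i)"
    and linB: "Vector_Spaces.linear s s B"
    and orth: "orthogonal_idempotents \<delta> F"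
    and sum1: "\<forall>v. (\<Sum>i\<le>\<delta>. F i v) = v"
    and tri: "\<forall>i\<le>\<delta>. B ` range (F i) \<subseteq> nbr \<delta> F i"
    and ij: "i \<le> \<delta>" "j \<le> \<delta>" and k: "int k < \<bar>int i - int j\<bar>"
  shows "F i ((B ^^ k) (F j v)) = 0"
  using ij k
proof (induction k arbitrary: i)
  case 0
  then show ?case using orth unfolding orthogonal_idempotents_def by auto
next
  case (Suc k)
  define x where "x = (B ^^ k) (F j v)"
  have "F i ((B ^^ Suc k) (F j v)) = F i (B (\<Sum>l\<le>\<delta>. F l x))"
    using sum1 by (simp add: x_def)
  also have "\<dots> = (\<Sum>l\<le>\<delta>. F i (B (F l x)))"
    using lin Suc.prems(1) linB by (simp add: linear_map_sum[of s B] linear_map_sum[of s "F i"])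
  also have "\<dots> = 0"
  proof (rule sum.neutral, intro ballI)
    fix l assume l: "l \<in> {..\<delta>}"
    show "F i (B (F l x)) = 0"
    proof (cases "int k < \<bar>int l - int j\<bar>")
      case True
      then have "F l x = 0"
        using Suc.IH l ij by (simp add: x_def)
      moreover have "Vector_Spaces.linear s s (F i)"
        using lin Suc.prems(1) by blast
      ultimately show ?thesis
        using linB by (simp add: linear_map_zero)
    next
      case False
      then have "1 < \<bar>int i - int l\<bar>"
        using Suc.prems(3) by linarith
      moreover have "B (F l x) \<in> nbr \<delta> F l"
        using tri l by blast
      ultimately show ?thesis
        using idempotent_vanishes_on_nbr[OF lin orth Suc.prems(1)] l by blast
    qed
  qed
  finally show ?case .
qed

definition shift_idempotents :: "nat \<Rightarrow> nat \<Rightarrow> (nat \<Rightarrow> 'v \<Rightarrow> 'v::zero) \<Rightarrow> nat \<Rightarrow> 'v \<Rightarrow> 'v" where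
  "shift_idempotents t \<delta> F i = (if t \<le> i \<and> i \<le> t + \<delta> then F (i - t) else (\<lambda>v. 0))"

lemma linear_shift_idempotents:
  assumes "vector_space s" and "\<forall>i\<le>\<delta>. Vector_Spaces.linear s s (F i)"
  shows "Vector_Spaces.linear s s (shift_idempotents t \<delta> F i)"
  using assms linear_const_zero by (auto simp: shift_idempotents_def)

lemma orthogonal_shift_idempotents:
  assumes lin: "\<forall>i\<le>\<delta>. Vector_Spaces.linear s s (F i)"
    and orth: "orthogonal_idempotents \<delta> F"
  shows "orthogonal_idempotents d (shift_idempotents t \<delta> F)"
  unfolding orthogonal_idempotents_def
proof (intro allI impI)
  fix i j v
  have "F (i - t) 0 = 0" if "i \<le> t + \<delta>"
  proof -
    have "Vector_Spaces.linear s s (F (i - t))"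
      using lin that by simp
    then show ?thesis
      by (rule linear_map_zero)
  qed
  moreover have "(i - t = j - t) = (i = j)" if "t \<le> i" "t \<le> j"
    using that by auto
  ultimately show "shift_idempotents t \<delta> F i (shift_idempotents t \<delta> F j v) =
      (if i = j then shift_idempotents t \<delta> F i v else 0)"
    using orth by (auto simp: shift_idempotents_def orthogonal_idempotents_def)
qed

lemma sum_shift_idempotents:
  assumes "t + \<delta> \<le> d" and "\<And>i. f i 0 = 0"
  shows "(\<Sum>i\<le>d. f i (shift_idempotents t \<delta> F i v)) = (\<Sum>l\<le>\<delta>. f (t + l) (F l v))"
proof -
  have "(\<Sum>i\<le>d. f i (shift_idempotents t \<delta> F i v)) =
      (\<Sum>i=t..t+\<delta>. f i (shift_idempotents t \<delta> F i v))"
    by (rule sum.mono_neutral_right) (use assms in \<open>auto simp: shift_idempotents_def\<close>)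
  also have "\<dots> = (\<Sum>l\<le>\<delta>. f (t + l) (shift_idempotents t \<delta> F (t + l) v))"
    using sum.shift_bounds_cl_nat_ivl[of _ 0 t \<delta>] by (simp add: atLeast0AtMost add.commute)
  also have "\<dots> = (\<Sum>l\<le>\<delta>. f (t + l) (F l v))"
    by (simp add: shift_idempotents_def)
  finally show ?thesis .
qed

lemma shift_idempotent_funpow_eq_0:
  assumes lin: "\<forall>i\<le>\<delta>. Vector_Spaces.linear s s (F i)"
    and linB: "Vector_Spaces.linear s s B"
    and orth: "orthogonal_idempotents \<delta> F"
    and sum1: "\<forall>v. (\<Sum>i\<le>\<delta>. F i v) = v"
    and tri: "\<forall>i\<le>\<delta>. B ` range (F i) \<subseteq> nbr \<delta> F i"
    and k: "int k < \<bar>int i - int j\<bar>"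
  shows "shift_idempotents t \<delta> F i ((B ^^ k) (shift_idempotents t \<delta> F j v)) = 0"
proof (cases "t \<le> i \<and> i \<le> t + \<delta>" "t \<le> j \<and> j \<le> t + \<delta>" rule: bool.exhaust[case_product bool.exhaust])
  case (True_True)
  moreover have "int k < \<bar>int (i - t) - int (j - t)\<bar>"
    using k True_True by auto
  ultimately show ?thesis
    using idempotent_funpow_idempotent_eq_0[OF lin linB orth sum1 tri]
    by (auto simp: shift_idempotents_def)
next
  case (True_False)
  then have "Vector_Spaces.linear s s (F (i - t))"
    using lin by auto
  with True_False show ?thesis
    using linB by (auto simp: shift_idempotents_def linear_map_funpow_zero linear_map_zero)
qed (auto simp: shift_idempotents_def)

lemma shift_prim_idems:
  fixes scale :: "'f::field \<Rightarrow> 'v::ab_group_add \<Rightarrow> 'v"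
  assumes vs: "vector_space scale" and td: "t + \<delta> \<le> d"
    and P: "prim_idems scale \<delta> A E (\<lambda>i. th (t + i))"
  shows "\<forall>i\<le>d. Vector_Spaces.linear scale scale (shift_idempotents t \<delta> E i)"
    and "orthogonal_idempotents d (shift_idempotents t \<delta> E)"
    and "\<forall>v. (\<Sum>i\<le>d. shift_idempotents t \<delta> E i v) = v"
    and "\<forall>v. A v = (\<Sum>i\<le>d. scale (th i) (shift_idempotents t \<delta> E i v))"
proof -
  have lin: "\<forall>i\<le>\<delta>. Vector_Spaces.linear scale scale (E i)"
    and orth: "orthogonal_idempotents \<delta> E"
    and sum1: "\<forall>v. (\<Sum>i\<le>\<delta>. E i v) = v"
    and A: "\<forall>v. A v = (\<Sum>i\<le>\<delta>. scale (th (t + i)) (E i v))"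
    using P unfolding prim_idems_def orthogonal_idempotents_def by auto
  show "\<forall>i\<le>d. Vector_Spaces.linear scale scale (shift_idempotents t \<delta> E i)"
    using linear_shift_idempotents[OF vs lin] by blast
  show "orthogonal_idempotents d (shift_idempotents t \<delta> E)"
    by (rule orthogonal_shift_idempotents[OF lin orth])
  show "\<forall>v. (\<Sum>i\<le>d. shift_idempotents t \<delta> E i v) = v"
    using sum_shift_idempotents[OF td, of "\<lambda>i x. x" E] sum1 by auto
  have "scale c 0 = 0" for c
    using vs by (simp add: module.scale_zero_right module_iff_vector_space)
  then show "\<forall>v. A v = (\<Sum>i\<le>d. scale (th i) (shift_idempotents t \<delta> E i v))"
    using sum_shift_idempotents[OF td, of "\<lambda>i. scale (th i)"] A by simp
qed

lemma T_module_shift_idempotents: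
  fixes scale :: "'f::field \<Rightarrow> 'v::ab_group_add \<Rightarrow> 'v"
  assumes "tridiagonal_system scale \<delta> A E As Es (\<lambda>i. th (t + i)) (\<lambda>i. ths (r + i))"
    and td: "t + \<delta> \<le> d" "r + \<delta> \<le> d"
  shows "T_module scale d th ths A (shift_idempotents t \<delta> E) As (shift_idempotents r \<delta> Es)"
proof -
  have vs: "vector_space scale"
    and P: "prim_idems scale \<delta> A E (\<lambda>i. th (t + i))"
    and Ps: "prim_idems scale \<delta> As Es (\<lambda>i. ths (r + i))"
    and tri: "\<forall>i\<le>\<delta>. As ` range (E i) \<subseteq> nbr \<delta> E i"
    and tris: "\<forall>i\<le>\<delta>. A ` range (Es i) \<subseteq> nbr \<delta> Es i"
    using assms(1) unfolding tridiagonal_system_def fin_dim_vs_def by blast+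
  have linA: "Vector_Spaces.linear scale scale A"
    and lin: "\<forall>i\<le>\<delta>. Vector_Spaces.linear scale scale (E i)"
    and orth: "orthogonal_idempotents \<delta> E"
    and sum1: "\<forall>v. (\<Sum>i\<le>\<delta>. E i v) = v"
    using P unfolding prim_idems_def orthogonal_idempotents_def by auto
  have linAs: "Vector_Spaces.linear scale scale As"
    and lins: "\<forall>i\<le>\<delta>. Vector_Spaces.linear scale scale (Es i)"
    and orths: "orthogonal_idempotents \<delta> Es"
    and sums1: "\<forall>v. (\<Sum>i\<le>\<delta>. Es i v) = v"
    using Ps unfolding prim_idems_def orthogonal_idempotents_def by auto
  show ?thesis
    unfolding T_module_def
    using linA linAs shift_prim_idems[OF vs td(1) P] shift_prim_idems[OF vs td(2) Ps]
      shift_idempotent_funpow_eq_0[OF lin linAs orth sum1 tri]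
      shift_idempotent_funpow_eq_0[OF lins linA orths sums1 tris]
    by (simp add: orthogonal_idempotents_def)
qed

lemma T_irreducible_if_tridiagonal_system:
  assumes "tridiagonal_system scale \<delta> A E As Es th' ths'"
  shows "T_irreducible scale d A e As es"
  using assms unfolding tridiagonal_system_def T_irreducible_def fin_dim_vs_def by blast

theorem proposition5p5:
  fixes scale :: "'f::field \<Rightarrow> 'v::ab_group_add \<Rightarrow> 'v"
    and d \<delta> r t :: nat
    and th ths :: "nat \<Rightarrow> 'f"
    and A As :: "'v \<Rightarrow> 'v" and E Es :: "nat \<Rightarrow> 'v \<Rightarrow> 'v"
  assumes "param_ok d th ths"
    and "\<delta> \<le> d" and "r \<le> d - \<delta>" and "t \<le> d - \<delta>"
    and "tridiagonal_system scale \<delta> A E As Es (\<lambda>i. th (t + i)) (\<lambda>i. ths (r + i))"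
  shows "\<exists>a e as es.
     T_module scale d th ths a e as es \<and>
     a = A \<and> as = As \<and>
     (\<forall>i\<le>d. e i = (if t \<le> i \<and> i \<le> t + \<delta> then E (i - t) else (\<lambda>v. 0))) \<and>
     (\<forall>i\<le>d. es i = (if r \<le> i \<and> i \<le> r + \<delta> then Es (i - r) else (\<lambda>v. 0))) \<and>
     T_irreducible scale d a e as es"
proof -
  have "t + \<delta> \<le> d" "r + \<delta> \<le> d"
    using assms(2-4) by auto
  with assms(5)
  have "T_module scale d th ths A (shift_idempotents t \<delta> E) As (shift_idempotents r \<delta> Es)"
    by (rule T_module_shift_idempotents)
  moreover have "T_irreducible scale d A (shift_idempotents t \<delta> E) As (shift_idempotents r \<delta> Es)"
    using assms(5) by (rule T_irreducible_if_tridiagonal_system)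
  ultimately show ?thesis
    unfolding shift_idempotents_def by blast
qed

end
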